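(* Let $I \subseteq R$ be a nonzero $\mathscr{D}(R,V)$-submodule of $R$. There exists a natural number $\ell \geq 0$ such that $I = \pi^\ell R$.
   Context: Let $(V, \pi V, k)$ be a DVR of mixed characteristic $(0,p)$ (i.e. $V$ has characteristic zero, maximal ideal generated by $\pi$, and residue field $k$ of characteristic $p>0$), and let $R$ be either $V[[x_1, \ldots, x_n]]$ or $V[x_1, \ldots, x_n]$ for some $n \geq 0$. $\mathscr{D}(R,V)$ denotes the ring of $V$-linear differential operators on $R$; it is generated over $R$ by the operators $\partial_i^{[t]} = \frac{1}{t!}\frac{\partial^t}{\partial x_i^t}$. *)

theory Defs
  imports Main
begin

definition dvr_uniformizer :: "'a::idom \<Rightarrow> bool" where
  "dvr_uniformizer pi \<longleftrightarrow> pi \<noteq> 0 \<and> \<not> pi dvd 1 \<and>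
     (\<forall>a. a \<noteq> 0 \<longrightarrow> (\<exists>u k. u dvd 1 \<and> a = u * pi ^ k))"

definition residue_char_pos :: "'a::idom \<Rightarrow> bool" where
  "residue_char_pos pi \<longleftrightarrow> (\<exists>p::nat. p > 0 \<and> pi dvd of_nat p)"

text \<open>Elements of V[[x_0..x_{n-1}]] are coefficient functions on exponent vectors
  alpha :: nat => nat vanishing outside {0..<n}.\<close>
definition PS :: "nat \<Rightarrow> ((nat \<Rightarrow> nat) \<Rightarrow> 'a::idom) set" where
  "PS n = {f. \<forall>\<alpha>. (\<exists>i\<ge>n. \<alpha> i \<noteq> 0) \<longrightarrow> f \<alpha> = 0}"

definition Poly :: "nat \<Rightarrow> ((nat \<Rightarrow> nat) \<Rightarrow> 'a::idom) set" where
  "Poly n = {f \<in> PS n. finite {\<alpha>. f \<alpha> \<noteq> 0}}"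

definition ps_mult :: "((nat \<Rightarrow> nat) \<Rightarrow> 'a::idom) \<Rightarrow> ((nat \<Rightarrow> nat) \<Rightarrow> 'a) \<Rightarrow> (nat \<Rightarrow> nat) \<Rightarrow> 'a" where
  "ps_mult f g \<gamma> = (\<Sum>\<alpha>\<in>{\<alpha>. \<forall>i. \<alpha> i \<le> \<gamma> i}. f \<alpha> * g (\<lambda>i. \<gamma> i - \<alpha> i))"

text \<open>Divided-power derivative partial_i^{[t]} = (1/t!) d^t/dx_i^t:
  x^beta maps to (beta_i choose t) x^(beta - t e_i).\<close>
definition divided_deriv :: "nat \<Rightarrow> nat \<Rightarrow> ((nat \<Rightarrow> nat) \<Rightarrow> 'a::idom) \<Rightarrow> (nat \<Rightarrow> nat) \<Rightarrow> 'a" where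
  "divided_deriv i t f \<alpha> = of_nat ((\<alpha> i + t) choose t) * f (\<alpha>(i := \<alpha> i + t))"

text \<open>A D(R,V)-submodule of R: an R-submodule (ideal) of R stable under all
  generators partial_i^{[t]} (i < n) of D(R,V) over R.\<close>
definition D_submodule :: "nat \<Rightarrow> ((nat \<Rightarrow> nat) \<Rightarrow> 'a::idom) set \<Rightarrow> ((nat \<Rightarrow> nat) \<Rightarrow> 'a) set \<Rightarrow> bool" where
  "D_submodule n R I \<longleftrightarrow> I \<subseteq> R \<and> (\<lambda>_. 0) \<in> I \<and>
     (\<forall>f\<in>I. \<forall>g\<in>I. (\<lambda>\<alpha>. f \<alpha> + g \<alpha>) \<in> I) \<and>
     (\<forall>r\<in>R. \<forall>f\<in>I. ps_mult r f \<in> I) \<and>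
     (\<forall>i<n. \<forall>t. \<forall>f\<in>I. divided_deriv i t f \<in> I)"

end

theory Submission
  imports Defs
begin

text \<open>Let \<open>l\<close> be the least valuation of a coefficient of an element of \<open>I\<close>, so that
  \<open>I \<subseteq> \<pi>\<^sup>l R\<close>; it suffices to show \<open>\<pi>\<^sup>l \<in> I\<close>. Take \<open>f \<in> I\<close> whose coefficient at \<open>x\<^sup>\<beta>\<close> is \<open>u \<pi>\<^sup>l\<close>
  with \<open>u\<close> a unit. Applying \<open>\<partial>\<^sub>i^[\<beta>\<^sub>i]\<close> for all \<open>i\<close> moves this coefficient to the constant term.
  For power series the result is \<open>\<pi>\<^sup>l\<close> times a unit of \<open>R\<close>, and multiplying by the inverse of
  that unit gives \<open>\<pi>\<^sup>l \<in> I\<close>. For polynomials, choosing \<open>\<beta>\<close> of maximal total degree in the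
  support of \<open>f\<close> makes the result the constant \<open>f\<^sub>\<beta>\<close>; subtracting that monomial from \<open>f\<close> and
  inducting on the size of the support shows that every coefficient of \<open>f\<close> lies in \<open>I\<close>.\<close>

definition exponent_in :: "nat \<Rightarrow> (nat \<Rightarrow> nat) \<Rightarrow> bool" where
  "exponent_in n \<alpha> \<longleftrightarrow> (\<forall>i\<ge>n. \<alpha> i = 0)"

definition total_degree :: "nat \<Rightarrow> (nat \<Rightarrow> nat) \<Rightarrow> nat" where
  "total_degree n \<alpha> = (\<Sum>i<n. \<alpha> i)"

definition ps_monom :: "(nat \<Rightarrow> nat) \<Rightarrow> 'a::idom \<Rightarrow> (nat \<Rightarrow> nat) \<Rightarrow> 'a" where
  "ps_monom \<beta> c = (\<lambda>\<alpha>. if \<alpha> = \<beta> then c else 0)"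

abbreviation ps_const :: "'a::idom \<Rightarrow> (nat \<Rightarrow> nat) \<Rightarrow> 'a" where
  "ps_const c \<equiv> ps_monom (\<lambda>_. 0) c"

lemma PS_iff: "f \<in> PS n \<longleftrightarrow> (\<forall>\<alpha>. \<not> exponent_in n \<alpha> \<longrightarrow> f \<alpha> = 0)"
  unfolding PS_def exponent_in_def by auto

lemma exponent_in_if_nonzero: "f \<in> PS n \<Longrightarrow> f \<alpha> \<noteq> 0 \<Longrightarrow> exponent_in n \<alpha>"
  unfolding PS_iff by blast

lemma exponent_in_zero [simp]: "exponent_in n (\<lambda>_. 0)"
  unfolding exponent_in_def by simp

lemma Poly_subset_PS: "Poly n \<subseteq> PS n"
  unfolding Poly_def by auto

lemma finite_box_below:
  assumes "exponent_in n \<gamma>"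
  shows "finite {\<alpha>. \<forall>i. \<alpha> i \<le> \<gamma> i}"
proof (rule finite_subset)
  show "{\<alpha>. \<forall>i. \<alpha> i \<le> \<gamma> i} \<subseteq>
      {\<alpha>. \<forall>i. (i \<in> {..<n} \<longrightarrow> \<alpha> i \<in> {..total_degree n \<gamma>}) \<and> (i \<notin> {..<n} \<longrightarrow> \<alpha> i = 0)}"
  proof (intro subsetI CollectI allI conjI impI)
    fix \<alpha> i assume "\<alpha> \<in> {\<alpha>. \<forall>i. \<alpha> i \<le> \<gamma> i}"
    then have le: "\<alpha> i \<le> \<gamma> i" by simp
    show "\<alpha> i \<in> {..total_degree n \<gamma>}" if "i \<in> {..<n}"
    proof -
      have "\<gamma> i \<le> total_degree n \<gamma>"
        unfolding total_degree_def using that by (intro member_le_sum) auto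
      then show ?thesis using le by simp
    qed
    show "\<alpha> i = 0" if "i \<notin> {..<n}"
      using that le assms unfolding exponent_in_def by auto
  qed
  show "finite {\<alpha>. \<forall>i. (i \<in> {..<n} \<longrightarrow> \<alpha> i \<in> {..total_degree n \<gamma>}) \<and> (i \<notin> {..<n} \<longrightarrow> \<alpha> i = 0)}"
    by (rule finite_set_of_finite_funs) auto
qed

lemma total_degree_less:
  assumes "exponent_in n \<gamma>" "\<forall>i. \<alpha> i \<le> \<gamma> i" "\<alpha> \<noteq> \<gamma>"
  shows "total_degree n \<alpha> < total_degree n \<gamma>"
proof -
  obtain i where i: "\<alpha> i < \<gamma> i"
    using assms(2,3) by (metis ext le_neq_implies_less)
  then have "i < n" using assms(1) unfolding exponent_in_def by (metis not_le not_less0)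
  then show ?thesis
    unfolding total_degree_def using assms(2) i by (intro sum_strict_mono_ex1) auto
qed

lemma total_degree_pos: "exponent_in n \<alpha> \<Longrightarrow> \<alpha> \<noteq> (\<lambda>_. 0) \<Longrightarrow> 0 < total_degree n \<alpha>"
  using total_degree_less[of n \<alpha> "\<lambda>_. 0"] by (simp add: total_degree_def)

lemma ps_monom_PS: "exponent_in n \<beta> \<Longrightarrow> ps_monom \<beta> c \<in> PS n"
  unfolding PS_iff ps_monom_def by auto

lemma ps_monom_Poly: "exponent_in n \<beta> \<Longrightarrow> ps_monom \<beta> c \<in> Poly n"
proof -
  assume "exponent_in n \<beta>"
  moreover have "{\<alpha>. ps_monom \<beta> c \<alpha> \<noteq> 0} \<subseteq> {\<beta>}" unfolding ps_monom_def by auto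
  ultimately show ?thesis
    unfolding Poly_def using ps_monom_PS finite_subset by fastforce
qed

lemma ps_monom_mem: "exponent_in n \<beta> \<Longrightarrow> R = PS n \<or> R = Poly n \<Longrightarrow> ps_monom \<beta> c \<in> R"
  using ps_monom_PS ps_monom_Poly by blast

lemma ps_mult_const_right:
  assumes "f \<in> PS n"
  shows "ps_mult f (ps_const c) = (\<lambda>\<gamma>. f \<gamma> * c)"
proof
  fix \<gamma> :: "nat \<Rightarrow> nat"
  let ?S = "{\<alpha>. \<forall>i. \<alpha> i \<le> \<gamma> i}"
  have "ps_mult f (ps_const c) \<gamma> = (\<Sum>\<alpha>\<in>?S. if \<gamma> = \<alpha> then f \<gamma> * c else 0)"
  proof (unfold ps_mult_def ps_monom_def, intro sum.cong refl)
    fix \<alpha> assume "\<alpha> \<in> ?S"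
    then have "(\<lambda>i. \<gamma> i - \<alpha> i) = (\<lambda>_. 0) \<longleftrightarrow> \<gamma> = \<alpha>"
      by (auto simp: fun_eq_iff) (metis diff_is_0_eq le_antisym)
    then show "f \<alpha> * (if (\<lambda>i. \<gamma> i - \<alpha> i) = (\<lambda>_. 0) then c else 0) =
        (if \<gamma> = \<alpha> then f \<gamma> * c else 0)" by auto
  qed
  also have "\<dots> = f \<gamma> * c"
  proof (cases "finite ?S")
    case False
    then have "f \<gamma> = 0" using assms finite_box_below exponent_in_if_nonzero by blast
    then show ?thesis using False by simp
  qed (simp add: sum.delta)
  finally show "ps_mult f (ps_const c) \<gamma> = f \<gamma> * c" .
qed

lemma ps_mult_const_left:
  assumes "f \<in> PS n"
  shows "ps_mult (ps_const c) f = (\<lambda>\<gamma>. c * f \<gamma>)"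
proof
  fix \<gamma> :: "nat \<Rightarrow> nat"
  let ?S = "{\<alpha>. \<forall>i. \<alpha> i \<le> \<gamma> i}"
  have "ps_mult (ps_const c) f \<gamma> = (\<Sum>\<alpha>\<in>?S. if (\<lambda>_. 0) = \<alpha> then c * f \<gamma> else 0)"
    unfolding ps_mult_def ps_monom_def by (intro sum.cong refl) auto
  also have "\<dots> = c * f \<gamma>"
  proof (cases "finite ?S")
    case False
    then have "f \<gamma> = 0" using assms finite_box_below exponent_in_if_nonzero by blast
    then show ?thesis using False by simp
  qed (simp add: sum.delta)
  finally show "ps_mult (ps_const c) f \<gamma> = c * f \<gamma>" .
qed

lemma ps_mult_scale_right: "ps_mult f (\<lambda>\<alpha>. c * g \<alpha>) = (\<lambda>\<gamma>. c * ps_mult f g \<gamma>)"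
  unfolding ps_mult_def by (simp add: sum_distrib_left mult.left_commute)

lemma ps_mult_PS:
  assumes "f \<in> PS n" "g \<in> PS n"
  shows "ps_mult f g \<in> PS n"
  unfolding PS_iff
proof (intro allI impI)
  fix \<gamma> assume \<gamma>: "\<not> exponent_in n \<gamma>"
  have "f \<alpha> * g (\<lambda>i. \<gamma> i - \<alpha> i) = 0" if "\<forall>i. \<alpha> i \<le> \<gamma> i" for \<alpha>
  proof -
    obtain i where "i \<ge> n" "\<gamma> i \<noteq> 0" using \<gamma> unfolding exponent_in_def by blast
    then have "\<alpha> i \<noteq> 0 \<or> \<gamma> i - \<alpha> i \<noteq> 0" using that by auto
    then have "\<not> exponent_in n \<alpha> \<or> \<not> exponent_in n (\<lambda>i. \<gamma> i - \<alpha> i)"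
      using \<open>i \<ge> n\<close> unfolding exponent_in_def by auto
    then show ?thesis using assms unfolding PS_iff by (metis mult_eq_0_iff)
  qed
  then show "ps_mult f g \<gamma> = 0" unfolding ps_mult_def by (intro sum.neutral) blast
qed

section \<open>Inverting a power series\<close>

text \<open>\<open>c\<close> is meant to be an inverse of the constant coefficient of \<open>h\<close>; the recursion solves
  \<open>ps_mult k h = 1\<close> coefficient by coefficient, by induction on the total degree.\<close>
function ps_inverse :: "nat \<Rightarrow> 'a::idom \<Rightarrow> ((nat \<Rightarrow> nat) \<Rightarrow> 'a) \<Rightarrow> (nat \<Rightarrow> nat) \<Rightarrow> 'a" where
  "ps_inverse n c h \<gamma> =
    (if \<not> exponent_in n \<gamma> then 0 else if \<gamma> = (\<lambda>_. 0) then c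
     else - c * (\<Sum>\<alpha>\<in>{\<alpha>. (\<forall>i. \<alpha> i \<le> \<gamma> i) \<and> \<alpha> \<noteq> \<gamma>}. ps_inverse n c h \<alpha> * h (\<lambda>i. \<gamma> i - \<alpha> i)))"
  by auto
termination
  by (relation "measure (\<lambda>(n, c, h, \<gamma>). total_degree n \<gamma>)") (auto intro: total_degree_less)

declare ps_inverse.simps [simp del]

lemma ps_inverse_PS: "ps_inverse n c h \<in> PS n"
  unfolding PS_iff by (subst ps_inverse.simps) simp

lemma ps_mult_ps_inverse:
  assumes h: "h \<in> PS n" and c: "c * h (\<lambda>_. 0) = 1"
  shows "ps_mult (ps_inverse n c h) h = ps_const 1"
proof
  fix \<gamma> :: "nat \<Rightarrow> nat"
  let ?k = "ps_inverse n c h"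
  let ?S' = "{\<alpha>. (\<forall>i. \<alpha> i \<le> \<gamma> i) \<and> \<alpha> \<noteq> \<gamma>}"
  let ?T = "\<Sum>\<alpha>\<in>?S'. ?k \<alpha> * h (\<lambda>i. \<gamma> i - \<alpha> i)"
  show "ps_mult ?k h \<gamma> = ps_const 1 \<gamma>"
  proof (cases "exponent_in n \<gamma>")
    case True
    have "{\<alpha>. \<forall>i. \<alpha> i \<le> \<gamma> i} = insert \<gamma> ?S'" by auto
    moreover have "finite ?S'" using finite_box_below[OF True] by (rule finite_subset[rotated]) auto
    ultimately have "ps_mult ?k h \<gamma> = ?k \<gamma> * h (\<lambda>_. 0) + ?T"
      unfolding ps_mult_def by simp
    also have "\<dots> = ps_const 1 \<gamma>"
    proof (cases "\<gamma> = (\<lambda>_. 0)")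
      case True
      then have "?S' = {}" by (auto simp: fun_eq_iff)
      then have "?T = 0" by (simp only: sum.empty)
      moreover have "?k \<gamma> = c" using True by (subst ps_inverse.simps) simp
      ultimately show ?thesis using True c by (simp add: ps_monom_def)
    next
      case False
      have "?k \<gamma> = - c * ?T" using \<open>exponent_in n \<gamma>\<close> False by (subst ps_inverse.simps) simp
      then show ?thesis using False c by (simp add: ps_monom_def algebra_simps)
    qed
    finally show ?thesis .
  next
    case False
    then have "\<gamma> \<noteq> (\<lambda>_. 0)" by auto
    then show ?thesis
      using ps_mult_PS[OF ps_inverse_PS h] False unfolding PS_iff ps_monom_def by simp
  qed
qed

lemma ex_coeffwise_quotient:
  fixes g :: "(nat \<Rightarrow> nat) \<Rightarrow> 'a::idom"
  assumes R: "R = PS n \<or> R = Poly n" and "g \<in> R" "c \<noteq> 0" and dvd: "\<forall>\<alpha>. c dvd g \<alpha>"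
  shows "\<exists>h\<in>R. g = (\<lambda>\<alpha>. c * h \<alpha>)"
proof -
  obtain h where h: "\<And>\<alpha>. g \<alpha> = c * h \<alpha>" using dvd unfolding dvd_def by metis
  then have same_support: "{\<alpha>. h \<alpha> \<noteq> 0} = {\<alpha>. g \<alpha> \<noteq> 0}" using \<open>c \<noteq> 0\<close> by auto
  have "h \<in> PS n \<longleftrightarrow> g \<in> PS n" unfolding PS_iff using h \<open>c \<noteq> 0\<close> by simp
  then have "h \<in> R" using R \<open>g \<in> R\<close> same_support unfolding Poly_def by auto
  then show ?thesis using h by blast
qed

section \<open>Iterated divided derivatives\<close>

fun multi_divided_deriv ::
  "nat \<Rightarrow> (nat \<Rightarrow> nat) \<Rightarrow> ((nat \<Rightarrow> nat) \<Rightarrow> 'a::idom) \<Rightarrow> (nat \<Rightarrow> nat) \<Rightarrow> 'a" where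
  "multi_divided_deriv 0 \<beta> f = f"
| "multi_divided_deriv (Suc m) \<beta> f = divided_deriv m (\<beta> m) (multi_divided_deriv m \<beta> f)"

lemma multi_divided_deriv_eq:
  "multi_divided_deriv m \<beta> f \<alpha> =
    (\<Prod>i<m. of_nat ((\<alpha> i + \<beta> i) choose \<beta> i)) * f (\<lambda>i. if i < m then \<alpha> i + \<beta> i else \<alpha> i)"
proof (induction m arbitrary: \<alpha>)
  case (Suc m)
  have "(\<Prod>i<m. of_nat (((\<alpha>(m := \<alpha> m + \<beta> m)) i + \<beta> i) choose \<beta> i)) =
      (\<Prod>i<m. (of_nat ((\<alpha> i + \<beta> i) choose \<beta> i) :: 'a))"
    by (rule prod.cong) auto
  moreover have "(\<lambda>i. if i < m then (\<alpha>(m := \<alpha> m + \<beta> m)) i + \<beta> i else (\<alpha>(m := \<alpha> m + \<beta> m)) i) =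
      (\<lambda>i. if i < Suc m then \<alpha> i + \<beta> i else \<alpha> i)"
    by (auto simp: fun_eq_iff less_Suc_eq)
  ultimately show ?case by (simp add: divided_deriv_def Suc mult_ac)
qed simp

lemma multi_divided_deriv_at_zero:
  assumes "exponent_in n \<beta>"
  shows "multi_divided_deriv n \<beta> f (\<lambda>_. 0) = f \<beta>"
proof -
  have "(\<lambda>i. if i < n then 0 + \<beta> i else 0) = \<beta>"
    using assms unfolding exponent_in_def by (auto simp: fun_eq_iff)
  then show ?thesis by (simp add: multi_divided_deriv_eq)
qed

lemma multi_divided_deriv_top_degree:
  assumes f: "f \<in> PS n" and \<beta>: "exponent_in n \<beta>"
    and top: "\<And>\<alpha>. f \<alpha> \<noteq> 0 \<Longrightarrow> total_degree n \<alpha> \<le> total_degree n \<beta>"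
  shows "multi_divided_deriv n \<beta> f = ps_const (f \<beta>)"
proof
  fix \<alpha> :: "nat \<Rightarrow> nat"
  show "multi_divided_deriv n \<beta> f \<alpha> = ps_const (f \<beta>) \<alpha>"
  proof (cases "\<alpha> = (\<lambda>_. 0)")
    case True
    then show ?thesis using multi_divided_deriv_at_zero[OF \<beta>] by (simp add: ps_monom_def)
  next
    case False
    let ?\<alpha>\<beta> = "\<lambda>i. if i < n then \<alpha> i + \<beta> i else \<alpha> i"
    have "f ?\<alpha>\<beta> = 0"
    proof (cases "exponent_in n \<alpha>")
      case True
      have "total_degree n ?\<alpha>\<beta> = total_degree n \<alpha> + total_degree n \<beta>"
        unfolding total_degree_def by (simp add: sum.distrib)
      then show ?thesis using top total_degree_pos[OF True False] by fastforce
    next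
      case False
      then have "\<not> exponent_in n ?\<alpha>\<beta>" unfolding exponent_in_def by auto
      then show ?thesis using f unfolding PS_iff by blast
    qed
    then show ?thesis using False by (simp add: multi_divided_deriv_eq ps_monom_def)
  qed
qed

section \<open>Submodules stable under divided derivatives\<close>

lemma D_submoduleD:
  assumes "D_submodule n R I"
  shows "I \<subseteq> R" and "(\<lambda>_. 0) \<in> I" and "f \<in> I \<Longrightarrow> g \<in> I \<Longrightarrow> (\<lambda>\<alpha>. f \<alpha> + g \<alpha>) \<in> I"
    and "r \<in> R \<Longrightarrow> f \<in> I \<Longrightarrow> ps_mult r f \<in> I"
    and "i < n \<Longrightarrow> f \<in> I \<Longrightarrow> divided_deriv i t f \<in> I"
  using assms unfolding D_submodule_def by blast+

lemma D_submodule_multi_divided_deriv: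
  assumes "D_submodule n R I" "f \<in> I" "m \<le> n"
  shows "multi_divided_deriv m \<beta> f \<in> I"
  using assms(3)
proof (induction m)
  case (Suc m)
  then show ?case using D_submoduleD(5)[OF assms(1)] by simp
qed (simp add: assms(2))

lemma D_submodule_subset_PS: "D_submodule n R I \<Longrightarrow> R = PS n \<or> R = Poly n \<Longrightarrow> I \<subseteq> PS n"
  using D_submoduleD(1) Poly_subset_PS by blast

lemma D_submodule_scale:
  assumes D: "D_submodule n R I" and R: "R = PS n \<or> R = Poly n" and "f \<in> I"
  shows "(\<lambda>\<alpha>. c * f \<alpha>) \<in> I"
proof -
  have "ps_mult (ps_const c) f \<in> I"
    using D_submoduleD(4)[OF D ps_monom_mem[OF exponent_in_zero R] \<open>f \<in> I\<close>] .
  moreover have "f \<in> PS n" using D_submodule_subset_PS[OF D R] \<open>f \<in> I\<close> by blast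
  ultimately show ?thesis by (simp add: ps_mult_const_left)
qed

lemma D_submodule_diff:
  assumes D: "D_submodule n R I" and R: "R = PS n \<or> R = Poly n" and "f \<in> I" "g \<in> I"
  shows "(\<lambda>\<alpha>. f \<alpha> - g \<alpha>) \<in> I"
  using D_submoduleD(3)[OF D \<open>f \<in> I\<close> D_submodule_scale[OF D R \<open>g \<in> I\<close>, of "- 1"]] by simp

lemma D_submodule_const_multiple:
  assumes D: "D_submodule n R I" and R: "R = PS n \<or> R = Poly n" and "ps_const c \<in> I" "r \<in> R"
  shows "(\<lambda>\<alpha>. c * r \<alpha>) \<in> I"
proof -
  have "ps_mult r (ps_const c) \<in> I" using D_submoduleD(4)[OF D \<open>r \<in> R\<close> \<open>ps_const c \<in> I\<close>] .
  moreover have "r \<in> PS n" using R \<open>r \<in> R\<close> Poly_subset_PS by blast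
  ultimately show ?thesis by (simp add: ps_mult_const_right mult.commute)
qed

lemma D_submodule_Poly_const_coeff:
  assumes D: "D_submodule n (Poly n) I" and "f \<in> I"
  shows "ps_const (f \<beta>) \<in> I"
  using \<open>f \<in> I\<close>
proof (induction "card {\<alpha>. f \<alpha> \<noteq> 0}" arbitrary: f rule: less_induct)
  case less
  let ?S = "{\<alpha>. f \<alpha> \<noteq> 0}"
  have R: "Poly n = PS n \<or> Poly n = Poly n" by simp
  have "f \<in> Poly n" using D_submoduleD(1)[OF D] less.prems by blast
  then have f: "f \<in> PS n" and fin: "finite ?S" unfolding Poly_def by auto
  show ?case
  proof (cases "?S = {}")
    case True
    then have "ps_const (f \<beta>) = (\<lambda>_. 0)" by (auto simp: ps_monom_def)
    then show ?thesis using D_submoduleD(2)[OF D] by simp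
  next
    case False
    then have "Max (total_degree n ` ?S) \<in> total_degree n ` ?S" using fin by (intro Max_in) auto
    then obtain \<beta>\<^sub>0 where "\<beta>\<^sub>0 \<in> ?S" and max: "total_degree n \<beta>\<^sub>0 = Max (total_degree n ` ?S)"
      by auto
    have top: "total_degree n \<alpha> \<le> total_degree n \<beta>\<^sub>0" if "f \<alpha> \<noteq> 0" for \<alpha>
      unfolding max using fin that by simp
    have \<beta>\<^sub>0: "exponent_in n \<beta>\<^sub>0" using \<open>\<beta>\<^sub>0 \<in> ?S\<close> f exponent_in_if_nonzero by blast
    have lead: "ps_const (f \<beta>\<^sub>0) \<in> I"
      using D_submodule_multi_divided_deriv[OF D less.prems order.refl, of \<beta>\<^sub>0]
        multi_divided_deriv_top_degree[OF f \<beta>\<^sub>0 top] by simp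
    have "(\<lambda>\<alpha>. f \<beta>\<^sub>0 * ps_monom \<beta>\<^sub>0 1 \<alpha>) \<in> I"
      using D_submodule_const_multiple[OF D R lead ps_monom_Poly[OF \<beta>\<^sub>0]] .
    then have "(\<lambda>\<alpha>. f \<alpha> - f \<beta>\<^sub>0 * ps_monom \<beta>\<^sub>0 1 \<alpha>) \<in> I"
      using D_submodule_diff[OF D R less.prems] by blast
    moreover define f' where "f' = (\<lambda>\<alpha>. f \<alpha> - f \<beta>\<^sub>0 * ps_monom \<beta>\<^sub>0 1 \<alpha>)"
    ultimately have "f' \<in> I" by simp
    have f': "f' \<alpha> = (if \<alpha> = \<beta>\<^sub>0 then 0 else f \<alpha>)" for \<alpha>
      unfolding f'_def ps_monom_def by simp
    then have "{\<alpha>. f' \<alpha> \<noteq> 0} = ?S - {\<beta>\<^sub>0}" by auto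
    then have "card {\<alpha>. f' \<alpha> \<noteq> 0} < card ?S"
      using card_Diff1_less[OF fin \<open>\<beta>\<^sub>0 \<in> ?S\<close>] by simp
    then have "ps_const (f' \<beta>) \<in> I" using less.hyps \<open>f' \<in> I\<close> by blast
    then show ?thesis using lead f' by (cases "\<beta> = \<beta>\<^sub>0") auto
  qed
qed

lemma D_submodule_PS_const:
  assumes D: "D_submodule n (PS n) I" and "f \<in> I" and f\<beta>: "f \<beta> = u * c"
    and "u dvd 1" "c \<noteq> 0" and dvd: "\<forall>g\<in>I. \<forall>\<alpha>. c dvd g \<alpha>"
  shows "ps_const c \<in> I"
proof -
  have R: "PS n = PS n \<or> PS n = Poly n" by simp
  obtain v where v: "v * u = 1" using \<open>u dvd 1\<close> by (metis dvdE mult.commute)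
  have "f \<in> PS n" using D_submoduleD(1)[OF D] \<open>f \<in> I\<close> by blast
  moreover have "f \<beta> \<noteq> 0" using f\<beta> v \<open>c \<noteq> 0\<close> by auto
  ultimately have "exponent_in n \<beta>" by (rule exponent_in_if_nonzero)
  define g where "g = multi_divided_deriv n \<beta> f"
  have "g \<in> I" unfolding g_def using D_submodule_multi_divided_deriv[OF D \<open>f \<in> I\<close>] by simp
  then obtain h where h: "h \<in> PS n" and g: "g = (\<lambda>\<alpha>. c * h \<alpha>)"
    using ex_coeffwise_quotient[OF R _ \<open>c \<noteq> 0\<close>] dvd D_submoduleD(1)[OF D] by blast
  have "c * h (\<lambda>_. 0) = c * u"
    using multi_divided_deriv_at_zero[OF \<open>exponent_in n \<beta>\<close>] f\<beta> g unfolding g_def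
    by (metis mult.commute)
  then have "ps_mult (ps_inverse n v h) h = ps_const 1" using \<open>c \<noteq> 0\<close> v h
    by (intro ps_mult_ps_inverse) simp_all
  then have "ps_mult (ps_inverse n v h) g = ps_const c"
    unfolding g ps_mult_scale_right by (simp add: ps_monom_def fun_eq_iff)
  moreover have "ps_mult (ps_inverse n v h) g \<in> I"
    using D_submoduleD(4)[OF D ps_inverse_PS \<open>g \<in> I\<close>] .
  ultimately show ?thesis by simp
qed

lemma D_submodule_const:
  assumes D: "D_submodule n R I" and R: "R = PS n \<or> R = Poly n"
    and "f \<in> I" "f \<beta> = u * c" "u dvd 1" "c \<noteq> 0" "\<forall>g\<in>I. \<forall>\<alpha>. c dvd g \<alpha>"
  shows "ps_const c \<in> I"
  using R
proof
  assume "R = PS n"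
  then show ?thesis using D_submodule_PS_const D assms(3-) by blast
next
  assume "R = Poly n"
  then have "ps_const (u * c) \<in> I" using D_submodule_Poly_const_coeff D assms(3,4) by metis
  moreover obtain v where "v * u = 1" using \<open>u dvd 1\<close> by (metis dvdE mult.commute)
  ultimately have "(\<lambda>\<alpha>. v * ps_const (u * c) \<alpha>) \<in> I" using D_submodule_scale[OF D R] by blast
  also have "(\<lambda>\<alpha>. v * ps_const (u * c) \<alpha>) = ps_const c"
    using \<open>v * u = 1\<close> by (auto simp: ps_monom_def mult.assoc[symmetric])
  finally show ?thesis .
qed

lemma dvr_uniformizer_least_valuation:
  fixes pi :: "'a::idom"
  assumes "dvr_uniformizer pi" "a \<in> A" "a \<noteq> 0"
  shows "\<exists>l. (\<exists>b\<in>A. \<exists>u. u dvd 1 \<and> b = u * pi ^ l) \<and> (\<forall>b\<in>A. pi ^ l dvd b)"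
proof -
  define P where "P l \<longleftrightarrow> (\<exists>b\<in>A. \<exists>u. u dvd 1 \<and> b = u * pi ^ l)" for l
  have "\<exists>l. P l" using assms unfolding dvr_uniformizer_def P_def by blast
  then have "P (LEAST l. P l)" by (rule LeastI_ex)
  moreover have "pi ^ (LEAST l. P l) dvd b" if "b \<in> A" for b
  proof (cases "b = 0")
    case False
    then obtain v k where "v dvd 1" "b = v * pi ^ k"
      using assms(1) unfolding dvr_uniformizer_def by blast
    moreover from this have "(LEAST l. P l) \<le> k" using \<open>b \<in> A\<close> by (intro Least_le) (auto simp: P_def)
    ultimately show ?thesis by (simp add: le_imp_power_dvd)
  qed simp
  ultimately show ?thesis unfolding P_def by blast
qed

theorem theorem3p2:
  fixes pi :: "'a::{idom, ring_char_0}" and n :: nat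
    and R I :: "((nat \<Rightarrow> nat) \<Rightarrow> 'a) set"
  assumes "dvr_uniformizer pi"
    and "residue_char_pos pi"
    and "R = PS n \<or> R = Poly n"
    and "D_submodule n R I"
    and "I \<noteq> {\<lambda>_. 0}"
  shows "\<exists>l::nat. I = {(\<lambda>\<alpha>. pi ^ l * f \<alpha>) | f. f \<in> R}"
proof -
  note D = assms(4) and R = assms(3)
  obtain g \<alpha> where "g \<in> I" "g \<alpha> \<noteq> 0"
    using assms(5) D_submoduleD(2)[OF D] by blast
  then obtain l f \<beta> u where "f \<in> I" "u dvd 1" "f \<beta> = u * pi ^ l"
    and dvd: "\<forall>g\<in>I. \<forall>\<alpha>. pi ^ l dvd g \<alpha>"
    using dvr_uniformizer_least_valuation[OF assms(1), of "g \<alpha>" "{g \<alpha> | g \<alpha>. g \<in> I}"] by blast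
  have "pi ^ l \<noteq> 0" using assms(1) unfolding dvr_uniformizer_def by simp
  then have const: "ps_const (pi ^ l) \<in> I"
    using D_submodule_const[OF D R \<open>f \<in> I\<close> \<open>f \<beta> = u * pi ^ l\<close> \<open>u dvd 1\<close>] dvd by blast
  have "I = {(\<lambda>\<alpha>. pi ^ l * f \<alpha>) | f. f \<in> R}"
  proof
    show "I \<subseteq> {(\<lambda>\<alpha>. pi ^ l * f \<alpha>) | f. f \<in> R}"
      using ex_coeffwise_quotient[OF R _ \<open>pi ^ l \<noteq> 0\<close>] dvd D_submoduleD(1)[OF D] by blast
    show "{(\<lambda>\<alpha>. pi ^ l * f \<alpha>) | f. f \<in> R} \<subseteq> I"
      using D_submodule_const_multiple[OF D R const] by blast
  qed
  then show ?thesis ..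
qed

end
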